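(* For every process term $p$ and every $d\in\mathbb{D}$: $[\![p]\!]\le d$ if and only if $(\mathbb{D},d)\models^a\varphi_p$.
   Context: Fix a finite set $\mathrm{Act}$ of events. For a dcpo $D$, $K(D)$ denotes its compact elements; a bifinite (SFP) domain is an algebraic dcpo in which for each finite $F\subseteq K(D)$ iterated minimal-upper-bound sets are finite and in $K(D)$ and every upper bound of $F$ is above a minimal upper bound. Scott topology: sets $U={\uparrow}(U\cap K(D))$; Lawson topology generated by ${\uparrow}k\setminus{\uparrow}l$, $k,l\in K(D)$. The mixed powerdomain $\mathcal{M}(D)$: pairs $(L,U)$, $L$ Scott-closed, $U$ Lawson-closed upper, $L={\downarrow}(L\cap U)$, ordered by $(L,U)\le(L',U')$ iff $L\subseteq L'$ and $U'\subseteq U$. $\mathbb{D}$ is the initial solution over bifinite domains of $\mathbb{D}\cong\prod_{\alpha\in\mathrm{Act}}\mathcal{M}(\mathbb{D})$, $d=((L^d_\alpha,U^d_\alpha))_\alpha$, viewed as a mixed transition system $(\mathbb{D},\mathbb{R}^a,\mathbb{R}^c)$ with $(d,\alpha,d')\in\mathbb{R}^a$ iff $d'\in L^d_\alpha$ and $(d,\alpha,d')\in\mathbb{R}^c$ iff $d'\in U^d_\alpha$. Hennessy–Milner logic: $\varphi::=tt\mid\neg\varphi\mid\langle\alpha\rangle\varphi\mid\varphi\wedge\varphi$; $[\alpha]\varphi:=\neg\langle\alpha\rangle\neg\varphi$, $\varphi\vee\psi:=\neg(\neg\varphi\wedge\neg\psi)$; empty conjunction is $tt$, empty disjunction is $\neg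 tt$. For $m\in\{a,c\}$ ($\neg a=c$, $\neg c=a$): $(\mathbb{D},d)\models^m tt$; $(\mathbb{D},d)\models^m\neg\varphi$ iff not $(\mathbb{D},d)\models^{\neg m}\varphi$; $(\mathbb{D},d)\models^m\langle\alpha\rangle\varphi$ iff $(\mathbb{D},d')\models^m\varphi$ for some $(d,\alpha,d')\in\mathbb{R}^m$; $\wedge$ componentwise. Process terms: $p::=\mathbf{0}\mid\bot\mid\alpha_{tt}.p\mid\alpha_\bot.p\mid p+p$ ($\alpha\in\mathrm{Act}$; neither summand of $+$ is $\mathbf{0}$ or $\bot$). Denotations: $[\![\mathbf{0}]\!]=((\emptyset,\emptyset))_\alpha$; $[\![\bot]\!]=((\emptyset,\mathbb{D}))_\alpha$; $[\![\alpha_{tt}.p]\!]$ has $\alpha$-component $({\downarrow}[\![p]\!],{\uparrow}[\![p]\!])$ and $(\emptyset,\emptyset)$ for $\beta\ne\alpha$; $[\![\alpha_\bot.p]\!]$ has $\alpha$-component $(\emptyset,{\uparrow}[\![p]\!])$ and $(\emptyset,\emptyset)$ for $\beta\ne\alpha$; $[\![p+q]\!]$ is the componentwise union of the $L$'s and of the $U$'s. Transitions: $\bot\xrightarrow{\gamma}_\bot\bot$ for all $\gamma$; $\alpha_{tt}.p\xrightarrow{\alpha}_{tt}p$; $\alpha_\bot.p\xrightarrow{\alpha}_\bot p$; if $p\xrightarrow{\alpha}_v p'$ then $p+q\xrightarrow{\alpha}_v p'$ and $q+p\xrightarrow{\alpha}_v p'$. Formulas: $\varphi_{\mathbf{0}}=\bigwedge_\alpha\neg\langle\alpha\rangle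 tt$; $\varphi_\bot=tt$; $\varphi_{\alpha_{tt}.p}=\langle\alpha\rangle\varphi_p\wedge[\alpha]\varphi_p\wedge\bigwedge_{\beta\ne\alpha}\neg\langle\beta\rangle tt$; $\varphi_{\alpha_\bot.p}=[\alpha]\varphi_p\wedge\bigwedge_{\beta\ne\alpha}\neg\langle\beta\rangle tt$; $\varphi_{p+q}=\bigwedge\{\langle\alpha\rangle\varphi_{r'} : p+q\xrightarrow{\alpha}_{tt}r'\}\wedge\bigwedge_{\alpha}[\alpha]\bigvee\{\varphi_{r'} : p+q\xrightarrow{\alpha}_v r',\ v\in\{\bot,tt\}\}$. *)

theory Defs
  imports Complex_Main
begin

definition directed :: "'d::order set \<Rightarrow> bool" where
  "directed S \<longleftrightarrow> S \<noteq> {} \<and> (\<forall>x\<in>S. \<forall>y\<in>S. \<exists>z\<in>S. x \<le> z \<and> y \<le> z)"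

definition is_ub :: "'d::order set \<Rightarrow> 'd \<Rightarrow> bool" where
  "is_ub S u \<longleftrightarrow> (\<forall>x\<in>S. x \<le> u)"

definition is_lub :: "'d::order set \<Rightarrow> 'd \<Rightarrow> bool" where
  "is_lub S s \<longleftrightarrow> is_ub S s \<and> (\<forall>u. is_ub S u \<longrightarrow> s \<le> u)"

definition dcpo :: "'d::order itself \<Rightarrow> bool" where
  "dcpo _ \<longleftrightarrow> (\<forall>S::'d set. directed S \<longrightarrow> (\<exists>s. is_lub S s))"

definition compact_el :: "'d::order \<Rightarrow> bool" where
  "compact_el k \<longleftrightarrow> (\<forall>S s. directed S \<longrightarrow> is_lub S s \<longrightarrow> k \<le> s \<longrightarrow> (\<exists>x\<in>S. k \<le> x))"

definition K :: "'d::order set" where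
  "K = {k. compact_el k}"

definition algebraic :: "'d::order itself \<Rightarrow> bool" where
  "algebraic _ \<longleftrightarrow> (\<forall>x::'d. directed {k\<in>K. k \<le> x} \<and> is_lub {k\<in>K. k \<le> x} x)"

definition mub :: "'d::order set \<Rightarrow> 'd set" where
  "mub S = {u. is_ub S u \<and> (\<forall>v. is_ub S v \<longrightarrow> v \<le> u \<longrightarrow> v = u)}"

inductive_set mub_closure :: "'d::order set \<Rightarrow> 'd set" for F :: "'d set" where
  base: "x \<in> F \<Longrightarrow> x \<in> mub_closure F"
| step: "finite G \<Longrightarrow> \<forall>g\<in>G. g \<in> mub_closure F \<Longrightarrow> x \<in> mub G \<Longrightarrow> x \<in> mub_closure F"

definition bifinite :: "'d::order itself \<Rightarrow> bool" where
  "bifinite T \<longleftrightarrow> dcpo T \<and> algebraic T \<and>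
     (\<forall>F::'d set. finite F \<and> F \<subseteq> K \<longrightarrow>
        finite (mub_closure F) \<and> mub_closure F \<subseteq> K \<and>
        (\<forall>u. is_ub F u \<longrightarrow> (\<exists>m\<in>mub F. m \<le> u)))"

definition up :: "'d::order \<Rightarrow> 'd set" where "up x = {y. x \<le> y}"
definition down :: "'d::order \<Rightarrow> 'd set" where "down x = {y. y \<le> x}"

definition upper_set :: "'d::order set \<Rightarrow> bool" where
  "upper_set U \<longleftrightarrow> (\<forall>x y. x \<in> U \<longrightarrow> x \<le> y \<longrightarrow> y \<in> U)"

definition scott_open :: "'d::order set \<Rightarrow> bool" where
  "scott_open U \<longleftrightarrow> U = (\<Union>k\<in>U \<inter> K. up k)"

definition scott_closed :: "'d::order set \<Rightarrow> bool" where
  "scott_closed L \<longleftrightarrow> scott_open (- L)"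

definition lawson_open :: "'d::order set \<Rightarrow> bool" where
  "lawson_open = generate_topology {up k - up l | k l. k \<in> K \<and> l \<in> K}"

definition lawson_closed :: "'d::order set \<Rightarrow> bool" where
  "lawson_closed U \<longleftrightarrow> lawson_open (- U)"

definition mixedPD :: "('d::order set \<times> 'd set) set" where
  "mixedPD = {(L, U). scott_closed L \<and> lawson_closed U \<and> upper_set U \<and>
                       L = {x. \<exists>y\<in>L \<inter> U. x \<le> y}}"

text \<open>dec is an order isomorphism D \<cong> \<Prod>_{\<alpha>\<in>Act} M(D), with the mixed (Egli-Milner-like)
  order on M(D): (L,U) \<le> (L',U') iff L \<subseteq> L' and U' \<subseteq> U.\<close>
definition mixed_iso :: "('d::order \<Rightarrow> ('act \<Rightarrow> 'd set \<times> 'd set)) \<Rightarrow> bool" where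
  "mixed_iso dec \<longleftrightarrow> bij_betw dec UNIV {f. \<forall>\<alpha>. f \<alpha> \<in> mixedPD} \<and>
     (\<forall>x y. x \<le> y \<longleftrightarrow> (\<forall>\<alpha>. fst (dec x \<alpha>) \<subseteq> fst (dec y \<alpha>) \<and> snd (dec y \<alpha>) \<subseteq> snd (dec x \<alpha>)))"

datatype 'act form = TT | Neg "'act form" | Dia 'act "'act form" | Conj "'act form" "'act form"

definition Box :: "'act \<Rightarrow> 'act form \<Rightarrow> 'act form" where
  "Box \<alpha> \<phi> = Neg (Dia \<alpha> (Neg \<phi>))"

definition Disj :: "'act form \<Rightarrow> 'act form \<Rightarrow> 'act form" where
  "Disj \<phi> \<psi> = Neg (Conj (Neg \<phi>) (Neg \<psi>))"

definition BigConj :: "'act form list \<Rightarrow> 'act form" where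
  "BigConj xs = foldr Conj xs TT"

definition BigDisj :: "'act form list \<Rightarrow> 'act form" where
  "BigDisj xs = Neg (BigConj (map Neg xs))"

text \<open>Mode True = a (may / R^a via L), mode False = c (must / R^c via U).\<close>
definition R :: "('d \<Rightarrow> ('act \<Rightarrow> 'd set \<times> 'd set)) \<Rightarrow> bool \<Rightarrow> 'd \<Rightarrow> 'act \<Rightarrow> 'd \<Rightarrow> bool" where
  "R dec m d \<alpha> d' \<longleftrightarrow> d' \<in> (if m then fst (dec d \<alpha>) else snd (dec d \<alpha>))"

fun sat :: "('d \<Rightarrow> ('act \<Rightarrow> 'd set \<times> 'd set)) \<Rightarrow> bool \<Rightarrow> 'd \<Rightarrow> 'act form \<Rightarrow> bool" where
  "sat dec m d TT = True"
| "sat dec m d (Neg \<phi>) = (\<not> sat dec (\<not> m) d \<phi>)"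
| "sat dec m d (Dia \<alpha> \<phi>) = (\<exists>d'. R dec m d \<alpha> d' \<and> sat dec m d' \<phi>)"
| "sat dec m d (Conj \<phi> \<psi>) = (sat dec m d \<phi> \<and> sat dec m d \<psi>)"

datatype 'act proc = PNil | PBot | PreT 'act "'act proc" | PreB 'act "'act proc"
  | PSum "'act proc" "'act proc"

fun wf_proc :: "'act proc \<Rightarrow> bool" where
  "wf_proc PNil = True"
| "wf_proc PBot = True"
| "wf_proc (PreT \<alpha> p) = wf_proc p"
| "wf_proc (PreB \<alpha> p) = wf_proc p"
| "wf_proc (PSum p q) = (p \<noteq> PNil \<and> p \<noteq> PBot \<and> q \<noteq> PNil \<and> q \<noteq> PBot \<and> wf_proc p \<and> wf_proc q)"

fun den :: "('d::order \<Rightarrow> ('act \<Rightarrow> 'd set \<times> 'd set)) \<Rightarrow> 'act proc \<Rightarrow> 'd" where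
  "den dec PNil = inv dec (\<lambda>\<alpha>. ({}, {}))"
| "den dec PBot = inv dec (\<lambda>\<alpha>. ({}, UNIV))"
| "den dec (PreT \<alpha> p) = inv dec (\<lambda>\<beta>. if \<beta> = \<alpha> then (down (den dec p), up (den dec p)) else ({}, {}))"
| "den dec (PreB \<alpha> p) = inv dec (\<lambda>\<beta>. if \<beta> = \<alpha> then ({}, up (den dec p)) else ({}, {}))"
| "den dec (PSum p q) = inv dec (\<lambda>\<alpha>. (fst (dec (den dec p) \<alpha>) \<union> fst (dec (den dec q) \<alpha>),
                                       snd (dec (den dec p) \<alpha>) \<union> snd (dec (den dec q) \<alpha>)))"

text \<open>Transitions p --\<alpha>-->_v p' as a list of triples (\<alpha>, v, p'), v = True for tt, False for bottom.
  Act is enumerated by the enum class.\<close>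
fun trans :: "'act::enum proc \<Rightarrow> ('act \<times> bool \<times> 'act proc) list" where
  "trans PNil = []"
| "trans PBot = map (\<lambda>\<gamma>. (\<gamma>, False, PBot)) enum_class.enum"
| "trans (PreT \<alpha> p) = [(\<alpha>, True, p)]"
| "trans (PreB \<alpha> p) = [(\<alpha>, False, p)]"
| "trans (PSum p q) = trans p @ trans q"

lemma trans_size: "x \<in> set (trans p) \<Longrightarrow> size (snd (snd x)) \<le> size p"
  by (induction p) auto

function phi :: "'act::enum proc \<Rightarrow> 'act form" where
  "phi PNil = BigConj (map (\<lambda>\<alpha>. Neg (Dia \<alpha> TT)) enum_class.enum)"
| "phi PBot = TT"
| "phi (PreT \<alpha> p) = Conj (Conj (Dia \<alpha> (phi p)) (Box \<alpha> (phi p)))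
                        (BigConj (map (\<lambda>\<beta>. Neg (Dia \<beta> TT)) (filter (\<lambda>\<beta>. \<beta> \<noteq> \<alpha>) enum_class.enum)))"
| "phi (PreB \<alpha> p) = Conj (Box \<alpha> (phi p))
                        (BigConj (map (\<lambda>\<beta>. Neg (Dia \<beta> TT)) (filter (\<lambda>\<beta>. \<beta> \<noteq> \<alpha>) enum_class.enum)))"
| "phi (PSum p q) = Conj
     (BigConj (map (\<lambda>t. Dia (fst t) (phi (snd (snd t))))
                   (filter (\<lambda>t. fst (snd t)) (trans (PSum p q)))))
     (BigConj (map (\<lambda>\<alpha>. Box \<alpha> (BigDisj (map (\<lambda>t. phi (snd (snd t)))
                                          (filter (\<lambda>t. fst t = \<alpha>) (trans (PSum p q))))))
                   enum_class.enum))"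
  by pat_completeness auto
termination
proof (relation "measure size")
  fix p q :: "'a::enum proc" and t
  assume "t \<in> set (filter (\<lambda>t. fst (snd t)) (trans (PSum p q)))"
  then have "t \<in> set (trans p) \<or> t \<in> set (trans q)" by auto
  then show "(snd (snd t), PSum p q) \<in> measure size"
    using trans_size[of t p] trans_size[of t q] by auto
next
  fix p q :: "'a::enum proc" and t and \<alpha> :: 'a
  assume "t \<in> set (filter (\<lambda>t. fst t = \<alpha>) (trans (PSum p q)))"
  then have "t \<in> set (trans p) \<or> t \<in> set (trans q)" by auto
  then show "(snd (snd t), PSum p q) \<in> measure size"
    using trans_size[of t p] trans_size[of t q] by auto
qed auto

end

theory Submission
  imports Defs
begin

(* Through the isomorphism dec, den p <= d says that every tt-successor r of p lies below some
   may-successor of d, and that every must-successor of d lies above den r for some successor r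
   of p. The characteristic formula phi p says literally the same with den r <= d' replaced by
   "d' satisfies phi r", so induction on the size of p identifies the two. The domain-theoretic
   hypotheses are needed only to see that the denotations of the constructors lie in M(D), so
   that dec inverts inv dec on them. *)

lemma bifinite_algebraic: "bifinite T \<Longrightarrow> algebraic T"
  unfolding bifinite_def by blast

lemma algebraic_compact_below_directed:
  "algebraic TYPE('d::order) \<Longrightarrow> directed {k\<in>K. k \<le> (x::'d)}"
  unfolding algebraic_def by blast

lemma algebraic_ex_compact_below:
  "algebraic TYPE('d::order) \<Longrightarrow> \<exists>k\<in>K. k \<le> (x::'d)"
  using algebraic_compact_below_directed unfolding directed_def by blast

lemma algebraic_not_le_compact:
  assumes "algebraic TYPE('d::order)" and "\<not> (x::'d) \<le> y"
  shows "\<exists>k\<in>K. k \<le> x \<and> \<not> k \<le> y"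
proof (rule ccontr)
  assume "\<not> ?thesis"
  then have "is_ub {k\<in>K. k \<le> x} y" unfolding is_ub_def by auto
  moreover have "is_lub {k\<in>K. k \<le> x} x" using assms(1) unfolding algebraic_def by blast
  ultimately have "x \<le> y" unfolding is_lub_def by blast
  with assms(2) show False by simp
qed

lemma scott_closed_iff:
  "scott_closed (L::'d::order set) \<longleftrightarrow>
     (\<forall>x y. y \<in> L \<longrightarrow> x \<le> y \<longrightarrow> x \<in> L) \<and> (\<forall>y. y \<notin> L \<longrightarrow> (\<exists>k\<in>K. k \<notin> L \<and> k \<le> y))"
  (is "_ \<longleftrightarrow> ?lower \<and> ?approx")
proof
  assume "scott_closed L"
  then have eq: "- L = (\<Union>k\<in>- L \<inter> K. up k)" unfolding scott_closed_def scott_open_def .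
  have ?lower
  proof (intro allI impI)
    fix x y assume "y \<in> L" "x \<le> y"
    show "x \<in> L"
    proof (rule ccontr)
      assume "x \<notin> L"
      then obtain k where "k \<in> - L \<inter> K" "k \<le> x" using eq by (auto simp: up_def)
      with \<open>x \<le> y\<close> have "y \<in> (\<Union>k\<in>- L \<inter> K. up k)" by (auto simp: up_def dest: order_trans)
      with \<open>y \<in> L\<close> show False using eq by blast
    qed
  qed
  moreover have ?approx using eq by (auto simp: up_def)
  ultimately show "?lower \<and> ?approx" ..
next
  assume "?lower \<and> ?approx"
  then show "scott_closed L" unfolding scott_closed_def scott_open_def up_def by blast
qed

lemma scott_closed_empty: "algebraic TYPE('d::order) \<Longrightarrow> scott_closed ({}::'d set)"
  unfolding scott_closed_iff using algebraic_ex_compact_below by blast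

lemma scott_closed_down: "algebraic TYPE('d::order) \<Longrightarrow> scott_closed (down (x::'d))"
  unfolding scott_closed_iff down_def using algebraic_not_le_compact by (auto dest: order_trans)

lemma scott_closed_Un:
  assumes "algebraic TYPE('d::order)" and "scott_closed (A::'d set)" and "scott_closed B"
  shows "scott_closed (A \<union> B)"
  unfolding scott_closed_iff
proof (intro conjI allI impI)
  fix x y assume "y \<in> A \<union> B" "x \<le> y"
  then show "x \<in> A \<union> B" using assms(2,3) unfolding scott_closed_iff by blast
next
  fix y assume "y \<notin> A \<union> B"
  then obtain kA kB where "kA \<in> K" "kA \<notin> A" "kA \<le> y" "kB \<in> K" "kB \<notin> B" "kB \<le> y"
    using assms(2,3) unfolding scott_closed_iff by blast
  moreover obtain k where "k \<in> K" "k \<le> y" "kA \<le> k" "kB \<le> k"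
    using algebraic_compact_below_directed[OF assms(1), of y] calculation
    unfolding directed_def by blast
  ultimately show "\<exists>k\<in>K. k \<notin> A \<union> B \<and> k \<le> y"
    using assms(2,3) unfolding scott_closed_iff by blast
qed

lemma lawson_closed_empty: "lawson_closed {}"
  unfolding lawson_closed_def lawson_open_def by (simp add: generate_topology.UNIV)

lemma lawson_closed_UNIV: "lawson_closed UNIV"
  unfolding lawson_closed_def lawson_open_def using generate_topology.UN[of "{}"] by simp

lemma lawson_closed_Un: "lawson_closed A \<Longrightarrow> lawson_closed B \<Longrightarrow> lawson_closed (A \<union> B)"
  unfolding lawson_closed_def lawson_open_def using generate_topology.Int by fastforce

lemma lawson_closed_up:
  assumes "algebraic TYPE('d::order)"
  shows "lawson_closed (up (x::'d))"
proof -
  let ?F = "{up l - up k | k l. k \<in> K \<and> l \<in> K \<and> k \<le> x}"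
  have "- up x = \<Union>?F"
  proof
    show "- up x \<subseteq> \<Union>?F"
    proof
      fix y assume "y \<in> - up x"
      then obtain k where "k \<in> K" "k \<le> x" "\<not> k \<le> y"
        using algebraic_not_le_compact[OF assms] by (auto simp: up_def)
      moreover obtain l where "l \<in> K" "l \<le> y" using algebraic_ex_compact_below[OF assms] by blast
      ultimately show "y \<in> \<Union>?F" by (auto simp: up_def)
    qed
    show "\<Union>?F \<subseteq> - up x" by (auto simp: up_def dest: order_trans)
  qed
  moreover have "generate_topology {up k - up l | k l. k \<in> K \<and> l \<in> K} (\<Union>?F)"
    by (rule generate_topology.UN) (auto intro: generate_topology.Basis)
  ultimately show ?thesis unfolding lawson_closed_def lawson_open_def by simp
qed

lemma upper_set_up: "upper_set (up x)"
  unfolding upper_set_def up_def by (auto dest: order_trans)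

lemma mixedPD_iff:
  "(L, U) \<in> mixedPD \<longleftrightarrow> scott_closed L \<and> lawson_closed U \<and> upper_set U \<and>
     L = {x. \<exists>y\<in>L \<inter> U. x \<le> y}"
  unfolding mixedPD_def by blast

lemma mixedPD_lower:
  assumes "(L, U) \<in> mixedPD" and "y \<in> L" and "x \<le> y"
  shows "x \<in> L"
proof -
  have L: "L = {x. \<exists>y\<in>L \<inter> U. x \<le> y}" using assms(1) unfolding mixedPD_iff by blast
  then obtain z where "z \<in> L \<inter> U" "y \<le> z" using assms(2) by blast
  with assms(3) have "x \<in> {x. \<exists>y\<in>L \<inter> U. x \<le> y}" by (blast dest: order_trans)
  then show ?thesis using L by blast
qed

lemma mixedPD_empty_fst:
  "algebraic TYPE('d::order) \<Longrightarrow> lawson_closed U \<Longrightarrow> upper_set U \<Longrightarrow> ({}, U::'d set) \<in> mixedPD"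
  unfolding mixedPD_iff by (simp add: scott_closed_empty)

lemma mixedPD_empty: "algebraic TYPE('d::order) \<Longrightarrow> ({}, {}::'d set) \<in> mixedPD"
  by (rule mixedPD_empty_fst) (simp_all add: lawson_closed_empty upper_set_def)

lemma mixedPD_down_up: "algebraic TYPE('d::order) \<Longrightarrow> (down x, up (x::'d)) \<in> mixedPD"
  unfolding mixedPD_iff
  by (simp add: scott_closed_down lawson_closed_up upper_set_up) (auto simp: down_def up_def)

lemma mixedPD_Un:
  assumes "algebraic TYPE('d::order)" and "(L1, U1) \<in> mixedPD" and "(L2, U2::'d set) \<in> mixedPD"
  shows "(L1 \<union> L2, U1 \<union> U2) \<in> mixedPD"
proof -
  have pd1: "scott_closed L1" "lawson_closed U1" "upper_set U1" "L1 \<subseteq> {x. \<exists>y\<in>L1 \<inter> U1. x \<le> y}"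
    using assms(2) unfolding mixedPD_iff by blast+
  have pd2: "scott_closed L2" "lawson_closed U2" "upper_set U2" "L2 \<subseteq> {x. \<exists>y\<in>L2 \<inter> U2. x \<le> y}"
    using assms(3) unfolding mixedPD_iff by blast+
  have "L1 \<union> L2 = {x. \<exists>y\<in>(L1 \<union> L2) \<inter> (U1 \<union> U2). x \<le> y}"
    using pd1(4) pd2(4) mixedPD_lower[OF assms(2)] mixedPD_lower[OF assms(3)] by blast
  moreover have "upper_set (U1 \<union> U2)" using pd1(3) pd2(3) unfolding upper_set_def by blast
  ultimately show ?thesis
    unfolding mixedPD_iff
    using scott_closed_Un[OF assms(1) pd1(1) pd2(1)] lawson_closed_Un[OF pd1(2) pd2(2)] by blast
qed

lemma mixed_iso_in_mixedPD: "mixed_iso dec \<Longrightarrow> dec x \<alpha> \<in> mixedPD"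
  unfolding mixed_iso_def bij_betw_def by blast

lemma mixed_iso_inv:
  assumes "mixed_iso dec" and "\<And>\<alpha>. f \<alpha> \<in> mixedPD"
  shows "dec (inv dec f) = f"
proof -
  have "f \<in> range dec" using assms unfolding mixed_iso_def bij_betw_def by blast
  then show ?thesis by (rule f_inv_into_f)
qed

lemma mixed_iso_le_iff:
  "mixed_iso dec \<Longrightarrow>
     x \<le> y \<longleftrightarrow> (\<forall>\<alpha>. fst (dec x \<alpha>) \<subseteq> fst (dec y \<alpha>) \<and> snd (dec y \<alpha>) \<subseteq> snd (dec x \<alpha>))"
  unfolding mixed_iso_def by blast

lemma mixed_iso_lower:
  "mixed_iso dec \<Longrightarrow> y \<in> fst (dec d \<alpha>) \<Longrightarrow> x \<le> y \<Longrightarrow> x \<in> fst (dec d \<alpha>)"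
  using mixedPD_lower[of "fst (dec d \<alpha>)" "snd (dec d \<alpha>)"] mixed_iso_in_mixedPD by fastforce

lemma dec_den_PBot:
  assumes "algebraic TYPE('d::order)" and "mixed_iso (dec::'d \<Rightarrow> _)"
  shows "dec (den dec PBot) = (\<lambda>\<alpha>. ({}, UNIV))"
  using mixed_iso_inv[OF assms(2)] mixedPD_empty_fst[OF assms(1) lawson_closed_UNIV]
  by (simp add: upper_set_def)

lemma den_PBot_le:
  assumes "algebraic TYPE('d::order)" and "mixed_iso (dec::'d \<Rightarrow> _)"
  shows "den dec PBot \<le> d"
  using dec_den_PBot[OF assms] by (simp add: mixed_iso_le_iff[OF assms(2)])

lemma dec_den:
  assumes "algebraic TYPE('d::order)" and "mixed_iso (dec::'d \<Rightarrow> ('act::enum \<Rightarrow> _))"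
  shows "dec (den dec p) \<alpha> =
    ({y. \<exists>r. (\<alpha>, True, r) \<in> set (trans p) \<and> y \<le> den dec r},
     {y. \<exists>v r. (\<alpha>, v, r) \<in> set (trans p) \<and> den dec r \<le> y})"
proof (induction p)
  case PNil
  show ?case using mixed_iso_inv[OF assms(2)] mixedPD_empty[OF assms(1)] by simp
next
  case PBot
  have "(\<alpha>, False, PBot) \<in> set (trans (PBot::'act proc))" using in_enum[of \<alpha>] by simp
  then have "{y. \<exists>v r. (\<alpha>, v, r) \<in> set (trans (PBot::'act proc)) \<and> den dec r \<le> y} = UNIV"
    using den_PBot_le[OF assms] by blast
  then show ?case using dec_den_PBot[OF assms] by auto
next
  case (PreT a p)
  show ?case
    using mixed_iso_inv[OF assms(2)] mixedPD_empty[OF assms(1)] mixedPD_down_up[OF assms(1)]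
    by (auto simp: up_def down_def)
next
  case (PreB a p)
  show ?case
    using mixed_iso_inv[OF assms(2)] mixedPD_empty[OF assms(1)]
      mixedPD_empty_fst[OF assms(1) lawson_closed_up[OF assms(1)] upper_set_up]
    by (auto simp: up_def down_def)
next
  case (PSum p q)
  have "dec (den dec (PSum p q)) \<alpha> =
      (fst (dec (den dec p) \<alpha>) \<union> fst (dec (den dec q) \<alpha>),
       snd (dec (den dec p) \<alpha>) \<union> snd (dec (den dec q) \<alpha>))"
    using mixed_iso_inv[OF assms(2)] mixedPD_Un[OF assms(1)] mixed_iso_in_mixedPD[OF assms(2)]
    by (simp add: prod.collapse)
  with PSum show ?case by auto
qed

definition step_match ::
  "('d \<Rightarrow> ('act \<Rightarrow> 'd set \<times> 'd set)) \<Rightarrow> ('act proc \<Rightarrow> 'd \<Rightarrow> bool) \<Rightarrow>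
   ('act \<times> bool \<times> 'act proc) list \<Rightarrow> 'd \<Rightarrow> bool" where
  "step_match dec rel ts d \<longleftrightarrow>
     (\<forall>\<alpha>. (\<forall>r. (\<alpha>, True, r) \<in> set ts \<longrightarrow> (\<exists>d'\<in>fst (dec d \<alpha>). rel r d')) \<and>
          (\<forall>d'\<in>snd (dec d \<alpha>). \<exists>v r. (\<alpha>, v, r) \<in> set ts \<and> rel r d'))"

lemma step_match_cong:
  assumes "\<And>\<alpha> v r d'. (\<alpha>, v, r) \<in> set ts \<Longrightarrow> rel r d' \<longleftrightarrow> rel' r d'"
  shows "step_match dec rel ts d \<longleftrightarrow> step_match dec rel' ts d"
proof -
  have "(\<exists>d'\<in>D. rel r d') \<longleftrightarrow> (\<exists>d'\<in>D. rel' r d')" if "(\<alpha>, True, r) \<in> set ts" for \<alpha> r D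
    using assms[OF that] by blast
  moreover have "(\<exists>v r. (\<alpha>, v, r) \<in> set ts \<and> rel r d') \<longleftrightarrow> (\<exists>v r. (\<alpha>, v, r) \<in> set ts \<and> rel' r d')"
    for \<alpha> d'
    using assms by blast
  ultimately show ?thesis unfolding step_match_def by simp
qed

lemma den_le_iff_step_match:
  assumes "algebraic TYPE('d::order)" and "mixed_iso (dec::'d \<Rightarrow> ('act::enum \<Rightarrow> _))"
  shows "den dec p \<le> d \<longleftrightarrow> step_match dec (\<lambda>r d'. den dec r \<le> d') (trans p) d"
proof -
  have "{y. \<exists>r. (\<alpha>, True, r) \<in> set (trans p) \<and> y \<le> den dec r} \<subseteq> fst (dec d \<alpha>) \<longleftrightarrow>
        (\<forall>r. (\<alpha>, True, r) \<in> set (trans p) \<longrightarrow> (\<exists>d'\<in>fst (dec d \<alpha>). den dec r \<le> d'))" for \<alpha>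
    using mixed_iso_lower[OF assms(2), of _ d \<alpha>] by blast
  then show ?thesis
    unfolding mixed_iso_le_iff[OF assms(2), of "den dec p" d] dec_den[OF assms] step_match_def
    by auto
qed

lemma sat_BigConj: "sat dec m d (BigConj xs) \<longleftrightarrow> (\<forall>x\<in>set xs. sat dec m d x)"
  unfolding BigConj_def by (induction xs) auto

lemma sat_BigDisj: "sat dec m d (BigDisj xs) \<longleftrightarrow> (\<exists>x\<in>set xs. sat dec m d x)"
  unfolding BigDisj_def by (simp add: sat_BigConj)

lemma sat_Box: "sat dec m d (Box \<alpha> \<phi>) \<longleftrightarrow> (\<forall>d'. R dec (\<not> m) d \<alpha> d' \<longrightarrow> sat dec m d' \<phi>)"
  unfolding Box_def by simp

lemma sat_Neg_Dia_TT: "sat dec True d (Neg (Dia \<alpha> TT)) \<longleftrightarrow> snd (dec d \<alpha>) = {}"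
  by (auto simp: R_def)

lemma sat_phi_iff_step_match:
  "sat dec True d (phi p) \<longleftrightarrow> step_match dec (\<lambda>r d'. sat dec True d' (phi r)) (trans p) d"
proof (cases p)
  case PNil
  then show ?thesis
    by (simp add: sat_BigConj sat_Neg_Dia_TT step_match_def enum_UNIV del: sat.simps)
next
  case PBot
  then show ?thesis by (force simp: step_match_def enum_UNIV)
next
  case (PreT a q)
  then show ?thesis
    by (auto simp: sat_BigConj sat_Neg_Dia_TT sat_Box R_def step_match_def enum_UNIV
        simp del: sat.simps(2))
next
  case (PreB a q)
  then show ?thesis
    by (auto simp: sat_BigConj sat_Neg_Dia_TT sat_Box R_def step_match_def enum_UNIV
        simp del: sat.simps(2))
next
  case (PSum p q)
  define ts where "ts = trans (PSum p q)"
  have may: "sat dec True d (BigConj (map (\<lambda>t. Dia (fst t) (phi (snd (snd t))))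
        (filter (\<lambda>t. fst (snd t)) ts)))
      \<longleftrightarrow> (\<forall>\<alpha> r. (\<alpha>, True, r) \<in> set ts \<longrightarrow> (\<exists>d'\<in>fst (dec d \<alpha>). sat dec True d' (phi r)))"
    by (force simp: sat_BigConj R_def)
  have must: "sat dec True d (BigConj (map (\<lambda>\<alpha>. Box \<alpha> (BigDisj (map (\<lambda>t. phi (snd (snd t)))
        (filter (\<lambda>t. fst t = \<alpha>) ts)))) enum_class.enum))
      \<longleftrightarrow> (\<forall>\<alpha>. \<forall>d'\<in>snd (dec d \<alpha>). \<exists>v r. (\<alpha>, v, r) \<in> set ts \<and> sat dec True d' (phi r))"
    by (force simp: sat_BigConj sat_BigDisj sat_Box R_def enum_UNIV simp del: sat.simps(2))
  show ?thesis
    unfolding PSum phi.simps(5) ts_def[symmetric] sat.simps(4) may must step_match_def by blast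
qed

lemma trans_size_less: "p \<noteq> PBot \<Longrightarrow> (\<alpha>, v, r) \<in> set (trans p) \<Longrightarrow> size r < size p"
  by (cases p) (auto dest: trans_size[of "(\<alpha>, v, r)"])

lemma den_le_iff_sat_phi:
  assumes "algebraic TYPE('d::order)" and "mixed_iso (dec::'d \<Rightarrow> ('act::enum \<Rightarrow> _))"
  shows "den dec p \<le> d \<longleftrightarrow> sat dec True d (phi p)"
proof (induction p arbitrary: d rule: measure_induct_rule[of size])
  case (less p)
  show ?case
  proof (cases "p = PBot")
    \<comment> \<open>PBot is its own successor, so the induction hypothesis does not cover it.\<close>
    case True
    then show ?thesis using den_PBot_le[OF assms] by simp
  next
    case False
    then have "step_match dec (\<lambda>r d'. den dec r \<le> d') (trans p) d \<longleftrightarrow>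
               step_match dec (\<lambda>r d'. sat dec True d' (phi r)) (trans p) d"
      using less trans_size_less by (intro step_match_cong) blast
    then show ?thesis
      unfolding den_le_iff_step_match[OF assms, of p d] sat_phi_iff_step_match[of dec d p] .
  qed
qed

theorem lemma3p11:
  fixes dec :: "'d::order \<Rightarrow> ('act::enum \<Rightarrow> 'd set \<times> 'd set)"
    and p :: "'act proc" and d :: 'd
  assumes "bifinite TYPE('d)"
    and "mixed_iso dec"
    and "wf_proc p"
  shows "den dec p \<le> d \<longleftrightarrow> sat dec True d (phi p)"
  using den_le_iff_sat_phi[OF bifinite_algebraic[OF assms(1)] assms(2)] .

end
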